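(* Let $K\ge2$, $p_1,\dots,p_K\in[0,1]$, $\alpha\in[0,1]$, and let $F:\bigcup_{n\ge1}[0,1]^n\to[0,1]$ be a symmetric function. All sets $I,J$ below are nonempty subsets of $\{1,\dots,K\}$. Let \[ \mathcal U:=\{I: F(p_i:i\in I)\le\alpha\},\qquad \mathcal X:=\{I:\ J\in\mathcal U\text{ for all }J\supseteq I\}, \] and for nonempty $R\subseteq\{1,\dots,K\}$ let $t_\alpha(R):=\max\{|I|: I\subseteq R,\ I\notin\mathcal X\}$ (with $\max\emptyset:=0$) and $f_\alpha(R):=|R|-t_\alpha(R)$. Define \[ D_p^R(j):=\max_{J:\ |R\setminus J|<j}F(p_i:i\in J). \] Then for every nonempty $R$ and every $j\in\{1,\dots,|R|\}$, \[ f_\alpha(R)\ge j\iff D_p^R(j)\le\alpha . \]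
   Context: Symmetric means the value of $F$ does not depend on the order of its arguments. (In the paper $F$ is a symmetric \textit{p}-merging function, but the equivalence uses only the stated definitions.) *)

theory Defs
  imports Complex_Main "HOL-Library.Multiset"
begin

text \<open>A function on finite tuples is modelled as a function on lists of reals;
  F(p_i : i in I) is F applied to the p-values indexed by I (in increasing order
  of index; by symmetry the order is irrelevant).\<close>

definition Fset :: "(real list \<Rightarrow> real) \<Rightarrow> (nat \<Rightarrow> real) \<Rightarrow> nat set \<Rightarrow> real" where
  "Fset F p I = F (map p (sorted_list_of_set I))"

definition symmetric_fun :: "(real list \<Rightarrow> real) \<Rightarrow> bool" where
  "symmetric_fun F \<longleftrightarrow> (\<forall>xs ys. mset xs = mset ys \<longrightarrow> F xs = F ys)"

definition idxsets :: "nat \<Rightarrow> nat set set" where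
  "idxsets K = {I. I \<subseteq> {1..K} \<and> I \<noteq> {}}"

definition Uset :: "nat \<Rightarrow> (real list \<Rightarrow> real) \<Rightarrow> (nat \<Rightarrow> real) \<Rightarrow> real \<Rightarrow> nat set set" where
  "Uset K F p \<alpha> = {I \<in> idxsets K. Fset F p I \<le> \<alpha>}"

definition Xset :: "nat \<Rightarrow> (real list \<Rightarrow> real) \<Rightarrow> (nat \<Rightarrow> real) \<Rightarrow> real \<Rightarrow> nat set set" where
  "Xset K F p \<alpha> = {I \<in> idxsets K. \<forall>J \<in> idxsets K. I \<subseteq> J \<longrightarrow> J \<in> Uset K F p \<alpha>}"

definition t_alpha :: "nat \<Rightarrow> (real list \<Rightarrow> real) \<Rightarrow> (nat \<Rightarrow> real) \<Rightarrow> real \<Rightarrow> nat set \<Rightarrow> nat" where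
  "t_alpha K F p \<alpha> R = Max (insert 0 {card I | I. I \<in> idxsets K \<and> I \<subseteq> R \<and> I \<notin> Xset K F p \<alpha>})"

definition f_alpha :: "nat \<Rightarrow> (real list \<Rightarrow> real) \<Rightarrow> (nat \<Rightarrow> real) \<Rightarrow> real \<Rightarrow> nat set \<Rightarrow> int" where
  "f_alpha K F p \<alpha> R = int (card R) - int (t_alpha K F p \<alpha> R)"

definition D_p :: "nat \<Rightarrow> (real list \<Rightarrow> real) \<Rightarrow> (nat \<Rightarrow> real) \<Rightarrow> nat set \<Rightarrow> nat \<Rightarrow> real" where
  "D_p K F p R j = Max {Fset F p J | J. J \<in> idxsets K \<and> card (R - J) < j}"

end

theory Submission
  imports Defs
begin

text \<open>Both sides say that every index set meeting R in more than |R| - j elements is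
  rejected: D_p^R(j) \<le> \<alpha> says every J with |R - J| < j lies in U, and f_\<alpha>(R) \<ge> j says
  every such core I = R \<inter> J lies in X. Passing from J to its core R \<inter> J, and from I to
  its supersets, does not increase |R - \<cdot>|, so the two conditions coincide. None of the
  range, symmetry or K \<ge> 2 hypotheses is needed.\<close>

lemma f_alpha_ge_iff:
  assumes "R \<subseteq> {1..K}" and "j \<le> card R"
  shows "f_alpha K F p \<alpha> R \<ge> int j \<longleftrightarrow>
    (\<forall>I\<in>idxsets K. I \<subseteq> R \<longrightarrow> card R < card I + j \<longrightarrow> I \<in> Xset K F p \<alpha>)"
proof -
  have "finite R" using assms(1) finite_subset by blast
  define S where "S = {card I | I. I \<in> idxsets K \<and> I \<subseteq> R \<and> I \<notin> Xset K F p \<alpha>}"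
  have "S \<subseteq> {0..card R}" unfolding S_def using \<open>finite R\<close> by (auto intro: card_mono)
  then have "finite S" using finite_subset by blast
  have "f_alpha K F p \<alpha> R \<ge> int j \<longleftrightarrow> t_alpha K F p \<alpha> R \<le> card R - j"
    unfolding f_alpha_def using assms(2) by linarith
  also have "\<dots> \<longleftrightarrow> (\<forall>s\<in>S. s \<le> card R - j)"
    unfolding t_alpha_def S_def[symmetric] using \<open>finite S\<close> by simp
  also have "\<dots> \<longleftrightarrow> (\<forall>I\<in>idxsets K. I \<subseteq> R \<longrightarrow> card R < card I + j \<longrightarrow> I \<in> Xset K F p \<alpha>)"
    unfolding S_def using assms(2) by auto
  finally show ?thesis .
qed

lemma D_p_le_iff:
  assumes "R \<in> idxsets K" and "0 < j"
  shows "D_p K F p R j \<le> \<beta> \<longleftrightarrow> (\<forall>J\<in>idxsets K. card (R - J) < j \<longrightarrow> Fset F p J \<le> \<beta>)"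
proof -
  define JS where "JS = {J \<in> idxsets K. card (R - J) < j}"
  have "finite JS" unfolding JS_def idxsets_def
    by (rule finite_subset[of _ "Pow {1..K}"]) auto
  moreover have "R \<in> JS" unfolding JS_def using assms by simp
  moreover have "{Fset F p J | J. J \<in> idxsets K \<and> card (R - J) < j} = Fset F p ` JS"
    unfolding JS_def by auto
  ultimately show ?thesis unfolding D_p_def JS_def by (subst Max_le_iff) auto
qed

lemma in_Uset_if_core_in_Xset:
  assumes core: "\<forall>I\<in>idxsets K. I \<subseteq> R \<longrightarrow> card R < card I + j \<longrightarrow> I \<in> Xset K F p \<alpha>"
    and "R \<subseteq> {1..K}" and "j \<le> card R"
    and J: "J \<in> idxsets K" "card (R - J) < j"
  shows "J \<in> Uset K F p \<alpha>"
proof -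
  have "finite R" using assms(2) finite_subset by blast
  have card_R: "card R = card (R \<inter> J) + card (R - J)"
    using card_Int_Diff[OF \<open>finite R\<close>] by (simp add: Int_commute)
  then have "card R < card (R \<inter> J) + j" using J(2) by linarith
  moreover from this have "R \<inter> J \<noteq> {}" using assms(3) by auto
  then have "R \<inter> J \<in> idxsets K" using assms(2) unfolding idxsets_def by auto
  ultimately have "R \<inter> J \<in> Xset K F p \<alpha>" using core by blast
  with J(1) show ?thesis unfolding Xset_def by blast
qed

lemma in_Xset_if_near_sets_in_Uset:
  assumes near: "\<forall>J\<in>idxsets K. card (R - J) < j \<longrightarrow> J \<in> Uset K F p \<alpha>"
    and "finite R" and I: "I \<in> idxsets K" "I \<subseteq> R" "card R < card I + j"
  shows "I \<in> Xset K F p \<alpha>"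
  unfolding Xset_def
proof (intro CollectI conjI ballI impI)
  show "I \<in> idxsets K" by fact
  fix J assume J: "J \<in> idxsets K" "I \<subseteq> J"
  have "card (R - J) \<le> card (R - I)" using \<open>finite R\<close> J(2) by (intro card_mono) auto
  also have "\<dots> = card R - card I"
    using \<open>finite R\<close> I(2) by (simp add: card_Diff_subset finite_subset)
  finally have "card (R - J) < j" using I(3) card_mono[OF \<open>finite R\<close> I(2)] by linarith
  then show "J \<in> Uset K F p \<alpha>" using near J(1) by blast
qed

theorem mainTheorem7:
  fixes K :: nat and p :: "nat \<Rightarrow> real" and \<alpha> :: real and F :: "real list \<Rightarrow> real"
    and R :: "nat set" and j :: nat
  assumes "K \<ge> 2"
    and "\<forall>i \<in> {1..K}. 0 \<le> p i \<and> p i \<le> 1"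
    and "0 \<le> \<alpha>" and "\<alpha> \<le> 1"
    and "\<forall>xs. xs \<noteq> [] \<and> set xs \<subseteq> {0..1} \<longrightarrow> 0 \<le> F xs \<and> F xs \<le> 1"
    and "symmetric_fun F"
    and "R \<subseteq> {1..K}" and "R \<noteq> {}"
    and "1 \<le> j" and "j \<le> card R"
  shows "f_alpha K F p \<alpha> R \<ge> int j \<longleftrightarrow> D_p K F p R j \<le> \<alpha>"
proof -
  have "finite R" using assms(7) finite_subset by blast
  have "R \<in> idxsets K" using assms(7,8) unfolding idxsets_def by simp
  have "D_p K F p R j \<le> \<alpha> \<longleftrightarrow> (\<forall>J\<in>idxsets K. card (R - J) < j \<longrightarrow> J \<in> Uset K F p \<alpha>)"
    using D_p_le_iff[OF \<open>R \<in> idxsets K\<close>] assms(9) unfolding Uset_def by auto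
  then show ?thesis
    unfolding f_alpha_ge_iff[OF assms(7,10)]
    using in_Uset_if_core_in_Xset[OF _ assms(7,10)]
      in_Xset_if_near_sets_in_Uset[OF _ \<open>finite R\<close>] by blast
qed

end
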